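(* Let $n\ge 3$ and let $k\in[1..n-2]$ be coprime to $n$. Then there are exactly three strings $\mathsf{T}$ of length $n$ over $\{\mathtt{a},\mathtt{b}\}$ ($\mathtt{a}<\mathtt{b}$) whose suffix array $\mathsf{SA}_{\mathsf{T}}=[p_1,\ldots,p_n]$ is an arithmetically progressed permutation with ratio $k$. Each such $\mathsf{T}$ has the form $\mathsf{T}[i]=\mathtt{a}$ if $i\in\{p_1,\ldots,p_s\}$ and $\mathsf{T}[i]=\mathtt{b}$ otherwise, for some $s\in[1..n-1]$ (so $p_s$ is the start of the lexicographically largest suffix beginning with $\mathtt{a}$), and the three strings are determined by: (1) $p_1=n$ and $p_s=n-k-1$; (2) $p_1=k+1$ and $p_s=n-k$; (3) $p_1=1$ and $p_s=n-k$. The strings in cases (1) and (2) have period $n-k$, and the string in case (3) is a Lyndon word.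
   Context: Lexicographic order with a proper prefix smaller than the longer string; suffix array $\mathsf{SA}_{\mathsf{T}}$: permutation of $[1..n]$ such that $\mathsf{T}[\mathsf{SA}_{\mathsf{T}}[i]..n]$ is the $i$-th smallest suffix. $x\bmod n$ denotes the representative of $x$ modulo $n$ in $[1..n]$. An arithmetically progressed permutation of length $n$ with ratio $k\in[1..n-1]$ is a permutation $P=[p_1,\ldots,p_n]$ of $[1..n]$ with $p_{i+1}=p_i+k\bmod n$. A string $\mathsf{T}$ of length $n$ has period $p\in[1..n-1]$ if $\mathsf{T}[i]=\mathsf{T}[i+p]$ for all $i\in[1..n-p]$. A Lyndon word is a string that is strictly smaller in lexicographic order than all its other cyclic rotations. *)

theory Defs
  imports Main
begin

text \<open>Strings over the binary alphabet {a,b} with a < b are modelled as bool lists,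
  letter a = False, letter b = True (False < True in Isabelle).
  Positions are 1-based: T[i] = T ! (i - 1), suffix T[i..n] = drop (i - 1) T.\<close>

type_synonym ab_string = "bool list"

abbreviation letter_a :: bool where "letter_a \<equiv> False"
abbreviation letter_b :: bool where "letter_b \<equiv> True"

definition suf :: "'a list \<Rightarrow> nat \<Rightarrow> 'a list" where
  "suf T i = drop (i - 1) T"

definition is_suffix_array :: "'a::linorder list \<Rightarrow> nat list \<Rightarrow> bool" where
  "is_suffix_array T SA \<longleftrightarrow>
     length SA = length T \<and> distinct SA \<and> set SA = {1..length T} \<and>
     (\<forall>i. i + 1 < length SA \<longrightarrow> ord_class.lexordp (suf T (SA ! i)) (suf T (SA ! (i + 1))))"

definition mod1 :: "nat \<Rightarrow> nat \<Rightarrow> nat" where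
  "mod1 x n = (if x mod n = 0 then n else x mod n)"

definition arith_prog_perm :: "nat \<Rightarrow> nat \<Rightarrow> nat list \<Rightarrow> bool" where
  "arith_prog_perm n k P \<longleftrightarrow>
     1 \<le> k \<and> k \<le> n - 1 \<and>
     length P = n \<and> distinct P \<and> set P = {1..n} \<and>
     (\<forall>i. i + 1 < n \<longrightarrow> P ! (i + 1) = mod1 (P ! i + k) n)"

definition has_period :: "'a list \<Rightarrow> nat \<Rightarrow> bool" where
  "has_period T p \<longleftrightarrow> 1 \<le> p \<and> p \<le> length T - 1 \<and>
     (\<forall>i\<in>{1..length T - p}. T ! (i - 1) = T ! (i + p - 1))"

definition lyndon :: "'a::linorder list \<Rightarrow> bool" where
  "lyndon T \<longleftrightarrow> T \<noteq> [] \<and> (\<forall>j\<in>{1..<length T}. ord_class.lexordp T (rotate j T))"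

definition sa_form :: "nat \<Rightarrow> ab_string \<Rightarrow> nat \<Rightarrow> nat \<Rightarrow> bool" where
  "sa_form n T p1 ps \<longleftrightarrow> (\<exists>P s. is_suffix_array T P \<and> 1 \<le> s \<and> s \<le> n - 1 \<and>
      (\<forall>i\<in>{1..n}. T ! (i - 1) = (if i \<in> set (take s P) then letter_a else letter_b)) \<and>
      P ! 0 = p1 \<and> P ! (s - 1) = ps)"

end

(* Along a suffix array the first letters are sorted, so a binary string with suffix array P is
   determined by the number s of suffixes starting with a: the letter at position P!i is a iff
   i < s.  Suffix arrays are characterised locally: two adjacent entries either start with
   different letters, or their tails (the suffixes one position later) occur in the same order.
   When P is an arithmetic progression with ratio k, the tail of P!(i+1) is the entry right after
   the tail of P!i, unless that tail is the last entry P!(n-1), or P!(i+1) = n has no tail.  So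
   the boundary s must sit at both of these exceptional places.  The first is absent iff
   P!(n-1) = 1, i.e. P!0 = k+1; the second is absent iff P!0 = n; they coincide iff P!0 = 1.
   Hence exactly these three starting values admit a string, and each admits exactly one. *)

theory Submission
  imports Defs "HOL-Number_Theory.Cong"
begin

lemma suf_conv_Cons:
  "1 \<le> p \<Longrightarrow> p \<le> length T \<Longrightarrow> suf T p = T ! (p - 1) # suf T (Suc p)"
  unfolding suf_def using Cons_nth_drop_Suc[of "p - 1" T] by simp

lemma suf_Suc_length: "suf T (Suc (length T)) = []"
  unfolding suf_def by simp

lemma suffix_array_sorted:
  assumes "is_suffix_array T P" "i < j" "j < length T"
  shows "ord_class.lexordp (suf T (P ! i)) (suf T (P ! j))"
proof -
  have "sorted_wrt ord_class.lexordp (map (suf T) P)"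
    using assms(1) lexordp_trans
    by (subst sorted_wrt_iff_nth_Suc_transp) (auto intro: transpI simp: is_suffix_array_def)
  then show ?thesis
    using assms sorted_wrt_nth_less unfolding is_suffix_array_def by fastforce
qed

definition rank :: "nat list \<Rightarrow> nat \<Rightarrow> nat" where
  "rank P x = (THE i. i < length P \<and> P ! i = x)"

lemma rank_nth: "distinct P \<Longrightarrow> i < length P \<Longrightarrow> rank P (P ! i) = i"
  unfolding rank_def by (rule the_equality) (auto simp: nth_eq_iff_index_eq)

lemma rank_less_nth_rank:
  "distinct P \<Longrightarrow> x \<in> set P \<Longrightarrow> rank P x < length P \<and> P ! rank P x = x"
  by (metis rank_nth in_set_conv_nth)

lemma length_perm: "distinct P \<Longrightarrow> set P = {1..m} \<Longrightarrow> length P = m"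
  by (metis card_atLeastAtMost diff_Suc_1 distinct_card)

lemma suffix_array_rank_less:
  assumes sa: "is_suffix_array T P" and x: "x \<in> {1..length T}" and y: "y \<in> {1..length T}"
    and lex: "ord_class.lexordp (suf T x) (suf T y)"
  shows "rank P x < rank P y"
proof -
  have P: "distinct P" "set P = {1..length T}" "length P = length T"
    using sa unfolding is_suffix_array_def by auto
  note rx = rank_less_nth_rank[OF P(1), of x] and ry = rank_less_nth_rank[OF P(1), of y]
  have x_rank: "P ! rank P x = x" and y_rank: "P ! rank P y = y" using rx ry x y P(2) by auto
  have "x \<noteq> y" using lex lexordp_irreflexive' by blast
  then have "rank P x \<noteq> rank P y" using x_rank y_rank by metis
  moreover have "\<not> rank P y < rank P x"
  proof
    assume "rank P y < rank P x"
    then have "ord_class.lexordp (suf T y) (suf T x)"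
      using suffix_array_sorted[OF sa] rx ry x y P x_rank y_rank by metis
    then show False using lex lexordp_antisym by blast
  qed
  ultimately show ?thesis by linarith
qed

definition adjacent_suffixes_ordered :: "'a::linorder list \<Rightarrow> nat list \<Rightarrow> bool" where
  "adjacent_suffixes_ordered T P \<longleftrightarrow> (\<forall>i. Suc i < length P \<longrightarrow>
     T ! (P ! i - 1) < T ! (P ! Suc i - 1) \<or>
     T ! (P ! i - 1) = T ! (P ! Suc i - 1) \<and>
       (P ! i = length T \<or> P ! Suc i \<noteq> length T \<and> rank P (P ! i + 1) < rank P (P ! Suc i + 1)))"

lemma suffix_array_adjacent_suffixes_ordered:
  assumes sa: "is_suffix_array T P"
  shows "adjacent_suffixes_ordered T P"
  unfolding adjacent_suffixes_ordered_def
proof (intro allI impI)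
  fix i assume i: "Suc i < length P"
  define p q where "p = P ! i" and "q = P ! Suc i"
  have P: "distinct P" "set P = {1..length T}" "length P = length T"
    using sa unfolding is_suffix_array_def by auto
  have pq: "p \<in> {1..length T}" "q \<in> {1..length T}" "p \<noteq> q"
    using i P nth_mem[of i P] nth_mem[of "Suc i" P] nth_eq_iff_index_eq[of P i "Suc i"]
    unfolding p_def q_def by auto
  have "ord_class.lexordp (suf T p) (suf T q)"
    using sa i unfolding is_suffix_array_def p_def q_def by simp
  then have "T ! (p - 1) < T ! (q - 1) \<or>
      T ! (p - 1) = T ! (q - 1) \<and> ord_class.lexordp (suf T (Suc p)) (suf T (Suc q))"
    using suf_conv_Cons[of p T] suf_conv_Cons[of q T] pq by auto
  moreover have "p = length T \<or> q \<noteq> length T \<and> rank P (p + 1) < rank P (q + 1)"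
    if lex: "ord_class.lexordp (suf T (Suc p)) (suf T (Suc q))"
  proof -
    have "q \<noteq> length T" using lex suf_Suc_length[of T] by auto
    moreover have "rank P (p + 1) < rank P (q + 1)" if "p \<noteq> length T"
      using lex suffix_array_rank_less[OF sa, of "Suc p" "Suc q"] pq that \<open>q \<noteq> length T\<close>
      by auto
    ultimately show ?thesis by blast
  qed
  ultimately show "T ! (P ! i - 1) < T ! (P ! Suc i - 1) \<or>
     T ! (P ! i - 1) = T ! (P ! Suc i - 1) \<and>
       (P ! i = length T \<or> P ! Suc i \<noteq> length T \<and> rank P (P ! i + 1) < rank P (P ! Suc i + 1))"
    unfolding p_def q_def by blast
qed

lemma first_letters_sorted:
  assumes "adjacent_suffixes_ordered T P" "i \<le> j" "j < length P"
  shows "T ! (P ! i - 1) \<le> T ! (P ! j - 1)"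
proof -
  have "sorted (map (\<lambda>l. T ! (P ! l - 1)) [0..<length P])"
    using assms(1) unfolding sorted_iff_nth_Suc adjacent_suffixes_ordered_def by fastforce
  then show ?thesis using sorted_nth_mono[of _ i j] assms(2,3) by fastforce
qed

lemma equal_first_letters_rank_less:
  assumes ord: "adjacent_suffixes_ordered T P" and len: "length P = length T"
    and ij: "i < j" "j < length T" and eq: "T ! (P ! i - 1) = T ! (P ! j - 1)"
    and not_last: "P ! i \<noteq> length T"
  shows "P ! j \<noteq> length T \<and> rank P (P ! i + 1) < rank P (P ! j + 1)"
proof -
  have step: "P ! l = length T \<or> P ! Suc l \<noteq> length T \<and> rank P (P ! l + 1) < rank P (P ! Suc l + 1)"
    if "i \<le> l" "l < j" for l
  proof -
    have "T ! (P ! i - 1) \<le> T ! (P ! l - 1)" "T ! (P ! l - 1) \<le> T ! (P ! Suc l - 1)"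
      "T ! (P ! Suc l - 1) \<le> T ! (P ! j - 1)"
      using first_letters_sorted[OF ord] that ij len by auto
    then have "T ! (P ! l - 1) = T ! (P ! Suc l - 1)" using eq by auto
    then show ?thesis using ord that ij len unfolding adjacent_suffixes_ordered_def by force
  qed
  have "P ! l \<noteq> length T \<and> rank P (P ! i + 1) < rank P (P ! l + 1)" if "i < l" "l \<le> j" for l
    using that
  proof (induction l)
    case (Suc l)
    show ?case
    proof (cases "i = l")
      case True
      then show ?thesis using step[of l] not_last Suc.prems by auto
    next
      case False
      then show ?thesis using Suc step[of l] by fastforce
    qed
  qed simp
  then show ?thesis using ij by blast
qed

lemma adjacent_suffixes_ordered_sorted:
  assumes ord: "adjacent_suffixes_ordered T P" and P: "distinct P" "set P = {1..length T}"
  shows "i < j \<Longrightarrow> j < length T \<Longrightarrow> ord_class.lexordp (suf T (P ! i)) (suf T (P ! j))"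
proof (induction "(length T - P ! i) + (length T - P ! j)" arbitrary: i j rule: less_induct)
  case less
  have len: "length P = length T" using length_perm[OF P] .
  have ij: "P ! i \<in> {1..length T}" "P ! j \<in> {1..length T}" "P ! i \<noteq> P ! j"
    using less.prems P len nth_mem[of i P] nth_mem[of j P] nth_eq_iff_index_eq[of P i j] by auto
  have suf_i: "suf T (P ! i) = T ! (P ! i - 1) # suf T (Suc (P ! i))"
    and suf_j: "suf T (P ! j) = T ! (P ! j - 1) # suf T (Suc (P ! j))"
    using suf_conv_Cons ij by auto
  consider "T ! (P ! i - 1) < T ! (P ! j - 1)" | "T ! (P ! i - 1) = T ! (P ! j - 1)"
    using first_letters_sorted[OF ord, of i j] less.prems len by fastforce
  then show ?case
  proof cases
    case 1
    then show ?thesis using suf_i suf_j by simp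
  next
    case eq: 2
    show ?thesis
    proof (cases "P ! i = length T")
      case True
      then have "suf T (Suc (P ! i)) = []" "suf T (Suc (P ! j)) \<noteq> []"
        using suf_Suc_length ij unfolding suf_def by auto
      then show ?thesis using suf_i suf_j eq by simp
    next
      case False
      define i' j' where "i' = rank P (P ! i + 1)" and "j' = rank P (P ! j + 1)"
      have j_not_last: "P ! j \<noteq> length T" and "i' < j'"
        using equal_first_letters_rank_less[OF ord len less.prems eq False] i'_def j'_def by auto
      have "i' < length T" "P ! i' = P ! i + 1" "j' < length T" "P ! j' = P ! j + 1"
        using rank_less_nth_rank[OF P(1), of "P ! i + 1"] rank_less_nth_rank[OF P(1), of "P ! j + 1"]
          ij False j_not_last P(2) len unfolding i'_def j'_def by auto
      moreover have "ord_class.lexordp (suf T (P ! i')) (suf T (P ! j'))"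
        using less.hyps[of i' j'] \<open>i' < j'\<close> calculation ij False j_not_last by auto
      ultimately show ?thesis using suf_i suf_j eq by simp
    qed
  qed
qed

lemma suffix_array_iff_adjacent_suffixes_ordered:
  assumes "distinct P" "set P = {1..length T}"
  shows "is_suffix_array T P \<longleftrightarrow> adjacent_suffixes_ordered T P"
  using suffix_array_adjacent_suffixes_ordered adjacent_suffixes_ordered_sorted[OF _ assms]
    length_perm[OF assms] assms
  unfolding is_suffix_array_def by auto

lemma lexordp_append_right_shorter:
  fixes xs ys :: "'a::linorder list"
  assumes "ord_class.lexordp xs ys" "length ys < length xs"
  shows "ord_class.lexordp xs (ys @ zs)"
proof -
  obtain us x y vs ws where "x < y" "xs = us @ x # vs" "ys = us @ y # ws"
    using assms unfolding lexordp_iff by auto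
  then show ?thesis by (simp add: lexordp_append_left_rightI)
qed

lemma lyndon_if_less_proper_suffixes:
  assumes "T \<noteq> []" "\<And>j. 1 \<le> j \<Longrightarrow> j < length T \<Longrightarrow> ord_class.lexordp T (drop j T)"
  shows "lyndon T"
  unfolding lyndon_def
proof (intro conjI ballI)
  fix j assume "j \<in> {1..<length T}"
  then have "ord_class.lexordp T (drop j T @ take j T)"
    using assms(2) by (intro lexordp_append_right_shorter) auto
  then show "ord_class.lexordp T (rotate j T)"
    using \<open>j \<in> {1..<length T}\<close> by (simp add: rotate_drop_take)
qed (use assms in simp)

lemma suffix_array_starting_at_1_lyndon:
  assumes sa: "is_suffix_array T P" and "T \<noteq> []" and first: "P ! 0 = 1"
  shows "lyndon T"
proof (rule lyndon_if_less_proper_suffixes[OF \<open>T \<noteq> []\<close>])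
  fix j assume j: "1 \<le> j" "j < length T"
  have P: "distinct P" "set P = {1..length T}" "length P = length T"
    using sa unfolding is_suffix_array_def by auto
  define r where "r = rank P (j + 1)"
  have r: "r < length T" "P ! r = j + 1"
    using rank_less_nth_rank[OF P(1), of "j + 1"] j P unfolding r_def by auto
  have "P ! r \<noteq> P ! 0" using r first j by simp
  then have "r \<noteq> 0" by (rule contrapos_nn) simp
  then have "ord_class.lexordp (suf T (P ! 0)) (suf T (P ! r))"
    using suffix_array_sorted[OF sa, of 0 r] r by simp
  then show "ord_class.lexordp T (drop j T)"
    using first r unfolding suf_def by simp
qed

lemma monotone_bool_threshold:
  fixes f :: "nat \<Rightarrow> bool"
  assumes "\<And>l. Suc l < n \<Longrightarrow> f l \<le> f (Suc l)"
  shows "\<exists>s. \<forall>i<n. f i = (s \<le> i)"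
  using assms
proof (induction n)
  case (Suc n)
  then obtain s where s: "\<forall>i<n. f i = (s \<le> i)" by auto
  show ?case
  proof (cases "f n")
    case True
    then show ?thesis using s by (intro exI[of _ "min s n"]) (auto simp: less_Suc_eq)
  next
    case False
    have "sorted (map f [0..<Suc n])" using Suc.prems by (auto simp: sorted_iff_nth_Suc simp del: upt_Suc)
    then have "\<not> f i" if "i \<le> n" for i
      using sorted_nth_mono[of "map f [0..<Suc n]" i n] that False by (simp del: upt_Suc)
    then show ?thesis by (intro exI[of _ "Suc n"]) auto
  qed
qed simp

definition block_string :: "nat list \<Rightarrow> nat \<Rightarrow> bool list" where
  "block_string P s = map (\<lambda>j. j \<notin> set (take s P)) [1..<length P + 1]"

lemma length_block_string [simp]: "length (block_string P s) = length P"
  unfolding block_string_def by (simp del: upt_Suc)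

lemma block_string_nth:
  "i \<in> {1..length P} \<Longrightarrow> block_string P s ! (i - 1) = (i \<notin> set (take s P))"
  unfolding block_string_def by (auto simp del: upt_Suc)

lemma block_string_at:
  assumes "distinct P" "set P = {1..length P}" "i < length P"
  shows "block_string P s ! (P ! i - 1) = (s \<le> i)"
proof -
  have "P ! i \<in> set (take s P) \<longleftrightarrow> i < s"
    using assms by (auto simp: in_set_conv_nth nth_eq_iff_index_eq)
  moreover have "P ! i \<in> {1..length P}" using assms(2,3) nth_mem by blast
  ultimately show ?thesis using block_string_nth[of "P ! i" P s] by auto
qed

lemma suffix_array_block_string:
  fixes T :: "bool list"
  assumes sa: "is_suffix_array T P"
  obtains s where "T = block_string P s"
proof -
  have P: "distinct P" "set P = {1..length T}" "length P = length T"
    using sa unfolding is_suffix_array_def by auto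
  have "T ! (P ! l - 1) \<le> T ! (P ! Suc l - 1)" if "Suc l < length P" for l
    using that by (intro first_letters_sorted[OF suffix_array_adjacent_suffixes_ordered[OF sa]]) auto
  then obtain s where s: "\<forall>i<length P. T ! (P ! i - 1) = (s \<le> i)"
    using monotone_bool_threshold[of "length P" "\<lambda>i. T ! (P ! i - 1)"] by blast
  have "T = block_string P s"
  proof (rule nth_equalityI)
    fix j assume j: "j < length T"
    define r where "r = rank P (j + 1)"
    have r: "r < length P" "P ! r = j + 1"
      using rank_less_nth_rank[OF P(1), of "j + 1"] j P(2) unfolding r_def by auto
    then have "T ! j = (s \<le> r)" using s by auto
    also have "\<dots> = block_string P s ! j"
      using block_string_at[of P r s] r P by simp
    finally show "T ! j = block_string P s ! j" .
  qed (use P in simp)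
  then show thesis by (rule that)
qed

lemma sa_form_block_string:
  assumes "is_suffix_array (block_string P s) P" "1 \<le> s" "s < length P"
  shows "sa_form (length P) (block_string P s) (P ! 0) (P ! (s - 1))"
proof -
  have "\<forall>i\<in>{1..length P}. block_string P s ! (i - 1) =
      (if i \<in> set (take s P) then letter_a else letter_b)"
    using block_string_nth[of _ P s] by simp
  then show ?thesis
    unfolding sa_form_def using assms by (intro exI[of _ P] exI[of _ s]) simp
qed

lemma mod1_range: "0 < n \<Longrightarrow> mod1 x n \<in> {1..n}"
  unfolding mod1_def by auto

lemma mod1_eq_iff_mod_eq: "mod1 x n = mod1 y n \<longleftrightarrow> x mod n = y mod n"
proof (cases "n = 0")
  case False
  then have "x mod n < n" "y mod n < n" by simp_all
  then show ?thesis by (metis less_not_refl mod1_def)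
qed (simp add: mod1_def)

lemma mod1_add_left: "mod1 (mod1 x n + y) n = mod1 (x + y) n"
  unfolding mod1_eq_iff_mod_eq by (metis mod1_def mod_add_left_eq mod_self)

lemma mod1_id: "x \<in> {1..n} \<Longrightarrow> mod1 x n = x"
  unfolding mod1_def by (cases "x = n") auto

lemma mod1_Suc: "0 < n \<Longrightarrow> mod1 x n \<noteq> n \<Longrightarrow> mod1 (Suc x) n = Suc (mod1 x n)"
  using mod1_add_left[of x n 1] mod1_range[of n x] by (simp add: mod1_id)

lemma mod1_add_small:
  assumes "x \<in> {1..n}" "1 \<le> k" "k < n"
  shows "mod1 (x + k) n = (if x + k \<le> n then x + k else x + k - n)"
proof (cases "x + k \<le> n")
  case False
  then have "mod1 (x + k) n = mod1 (x + k - n) n"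
    unfolding mod1_eq_iff_mod_eq by (simp add: le_mod_geq)
  moreover have "mod1 (x + k - n) n = x + k - n" using False assms by (intro mod1_id) auto
  ultimately show ?thesis using False by auto
qed (use assms in \<open>simp add: mod1_id\<close>)

definition ap_perm :: "nat \<Rightarrow> nat \<Rightarrow> nat \<Rightarrow> nat list" where
  "ap_perm n k p = map (\<lambda>i. mod1 (p + i * k) n) [0..<n]"

lemma ap_perm_nth_0: "p \<in> {1..n} \<Longrightarrow> ap_perm n k p ! 0 = p"
  unfolding ap_perm_def by (auto simp: mod1_id)

lemma arith_prog_perm_ap_perm:
  assumes "coprime k n" "1 \<le> k" "k \<le> n - 1" "p \<in> {1..n}"
  shows "arith_prog_perm n k (ap_perm n k p)"
proof -
  let ?P = "ap_perm n k p"
  have nth: "?P ! i = mod1 (p + i * k) n" if "i < n" for i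
    using that unfolding ap_perm_def by simp
  have "distinct ?P"
    unfolding distinct_conv_nth
  proof (intro allI impI)
    fix i j assume ij: "i < length ?P" "j < length ?P" "i \<noteq> j"
    have "\<not> [p + i * k = p + j * k] (mod n)"
    proof
      assume "[p + i * k = p + j * k] (mod n)"
      then have "[i = j] (mod n)"
        using cong_mult_rcancel_nat[OF assms(1)] by (simp add: cong_add_lcancel_nat)
      then show False using ij cong_less_modulus_unique_nat unfolding ap_perm_def by simp
    qed
    then show "?P ! i \<noteq> ?P ! j"
      using ij nth unfolding ap_perm_def cong_def by (simp add: mod1_eq_iff_mod_eq)
  qed
  moreover have "set ?P \<subseteq> {1..n}" using mod1_range assms(4) unfolding ap_perm_def by auto
  ultimately have "set ?P = {1..n}"
    using distinct_card[of ?P] by (intro card_subset_eq) (auto simp: ap_perm_def)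
  moreover have "?P ! Suc i = mod1 (?P ! i + k) n" if "Suc i < n" for i
    using that nth mod1_add_left[of "p + i * k" n k] by (simp add: algebra_simps)
  ultimately show ?thesis
    using \<open>distinct ?P\<close> assms unfolding arith_prog_perm_def by (simp add: ap_perm_def)
qed

lemma arith_prog_perm_nth:
  assumes ap: "arith_prog_perm n k P" and "i < n"
  shows "P ! i = mod1 (P ! 0 + i * k) n"
  using \<open>i < n\<close>
proof (induction i)
  case 0
  then show ?case using ap nth_mem[of 0 P] by (simp add: arith_prog_perm_def mod1_id)
next
  case (Suc i)
  then have "P ! Suc i = mod1 (mod1 (P ! 0 + i * k) n + k) n"
    using ap unfolding arith_prog_perm_def by simp
  also have "\<dots> = mod1 (P ! 0 + i * k + k) n" by (rule mod1_add_left)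
  also have "\<dots> = mod1 (P ! 0 + Suc i * k) n" by (simp add: algebra_simps)
  finally show ?case .
qed

lemma arith_prog_perm_eq_ap_perm:
  assumes ap: "arith_prog_perm n k P"
  shows "P = ap_perm n k (P ! 0)"
proof (rule nth_equalityI)
  show "length P = length (ap_perm n k (P ! 0))"
    using ap by (simp add: arith_prog_perm_def ap_perm_def)
  show "P ! i = ap_perm n k (P ! 0) ! i" if "i < length P" for i
    using that arith_prog_perm_nth[OF ap, of i] ap by (simp add: arith_prog_perm_def ap_perm_def)
qed

locale ap_suffix_array =
  fixes n k :: nat and P :: "nat list"
  assumes arith_prog: "arith_prog_perm n k P" and n_ge_3: "3 \<le> n" and k_le: "k \<le> n - 2"
begin

lemma length_P: "length P = n" and distinct_P: "distinct P" and set_P: "set P = {1..n}"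
  and k_ge_1: "1 \<le> k" and P_Suc: "\<And>i. Suc i < n \<Longrightarrow> P ! Suc i = mod1 (P ! i + k) n"
  using arith_prog unfolding arith_prog_perm_def by auto

lemma k_less_n: "k < n"
  using k_le n_ge_3 by linarith

lemma P_in: "i < n \<Longrightarrow> P ! i \<in> {1..n}"
  using set_P length_P nth_mem by blast

lemma P_eq_iff: "i < n \<Longrightarrow> j < n \<Longrightarrow> P ! i = P ! j \<longleftrightarrow> i = j"
  using distinct_P length_P by (simp add: nth_eq_iff_index_eq)

lemma rank_P: "x \<in> {1..n} \<Longrightarrow> rank P x < n \<and> P ! rank P x = x"
  using rank_less_nth_rank[OF distinct_P] set_P length_P by auto

lemma rank_P_nth: "i < n \<Longrightarrow> rank P (P ! i) = i"
  using rank_nth[OF distinct_P] length_P by simp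

lemma mod1_last_add: "mod1 (P ! (n - 1) + k) n = P ! 0"
proof -
  have "(n - 1) * k + k = n * k" using n_ge_3 by (cases n) auto
  then have "mod1 (P ! (n - 1) + k) n = mod1 (P ! 0 + n * k) n"
    using arith_prog_perm_nth[OF arith_prog, of "n - 1"] n_ge_3
    by (simp add: mod1_add_left add.assoc)
  also have "\<dots> = P ! 0"
  proof -
    have "mod1 (P ! 0 + n * k) n = mod1 (P ! 0) n" by (simp add: mod1_eq_iff_mod_eq)
    then show ?thesis using P_in[of 0] n_ge_3 by (simp add: mod1_id)
  qed
  finally show ?thesis .
qed

lemma P_last: "P ! (n - 1) = (if k < P ! 0 then P ! 0 - k else P ! 0 + n - k)"
proof -
  have x: "P ! (n - 1) \<in> {1..n}" using P_in n_ge_3 by simp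
  have "P ! 0 = (if P ! (n - 1) + k \<le> n then P ! (n - 1) + k else P ! (n - 1) + k - n)"
    using mod1_last_add mod1_add_small[OF x k_ge_1 k_less_n] by argo
  then show ?thesis
  proof (cases "P ! (n - 1) + k \<le> n")
    case True
    then have "P ! 0 = P ! (n - 1) + k" using \<open>P ! 0 = _\<close> by simp
    then show ?thesis using x by simp
  next
    case False
    then have "P ! 0 = P ! (n - 1) + k - n" using \<open>P ! 0 = _\<close> by simp
    moreover have "\<not> k < P ! 0" using calculation x by (simp only: atLeastAtMost_iff) arith
    ultimately show ?thesis using False by simp
  qed
qed

lemma rank_mod1_add:
  assumes "x \<in> {1..n}"
  shows "rank P (mod1 (x + k) n) = (if rank P x = n - 1 then 0 else Suc (rank P x))"
proof (cases "rank P x = n - 1")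
  case True
  then show ?thesis using mod1_last_add rank_P[OF assms] rank_P_nth[of 0] n_ge_3 by auto
next
  case False
  then have "Suc (rank P x) < n" using rank_P[OF assms] by auto
  then show ?thesis using P_Suc rank_P[OF assms] rank_P_nth False by metis
qed

lemma rank_Suc_less_iff:
  assumes i: "Suc i < n" and not_last: "P ! i \<noteq> n" "P ! Suc i \<noteq> n"
  shows "rank P (P ! i + 1) < rank P (P ! Suc i + 1) \<longleftrightarrow> P ! i + 1 \<noteq> P ! (n - 1)"
proof -
  have x: "P ! i + 1 \<in> {1..n}" using P_in[of i] not_last i by auto
  have "P ! Suc i + 1 = mod1 (P ! i + 1 + k) n"
    using P_Suc[OF i] mod1_Suc[of n "P ! i + k"] not_last i by simp
  then have "rank P (P ! Suc i + 1) =
      (if rank P (P ! i + 1) = n - 1 then 0 else Suc (rank P (P ! i + 1)))"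
    using rank_mod1_add[OF x] by simp
  moreover have "rank P (P ! i + 1) = n - 1 \<longleftrightarrow> P ! i + 1 = P ! (n - 1)"
    using rank_P[OF x] rank_P_nth[of "n - 1"] n_ge_3 by auto
  ultimately show ?thesis by auto
qed

definition admissible_split :: "nat \<Rightarrow> bool" where
  "admissible_split s \<longleftrightarrow> (\<forall>i. Suc i < n \<longrightarrow>
     Suc i = s \<or> P ! i = n \<or> P ! Suc i \<noteq> n \<and> P ! i + 1 \<noteq> P ! (n - 1))"

lemma suffix_array_block_string_iff:
  "is_suffix_array (block_string P s) P \<longleftrightarrow> admissible_split s"
proof -
  let ?T = "block_string P s"
  have letter: "?T ! (P ! i - 1) = (s \<le> i)" if "i < n" for i
    using block_string_at[OF distinct_P] set_P length_P that by simp
  have "(?T ! (P ! i - 1) < ?T ! (P ! Suc i - 1) \<or>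
        ?T ! (P ! i - 1) = ?T ! (P ! Suc i - 1) \<and>
          (P ! i = n \<or> P ! Suc i \<noteq> n \<and> rank P (P ! i + 1) < rank P (P ! Suc i + 1)))
      \<longleftrightarrow> Suc i = s \<or> P ! i = n \<or> P ! Suc i \<noteq> n \<and> P ! i + 1 \<noteq> P ! (n - 1)"
    if "Suc i < n" for i
    using letter[of i] letter[of "Suc i"] rank_Suc_less_iff[OF that] that
    by (auto simp: less_bool_def)
  moreover have "is_suffix_array ?T P \<longleftrightarrow> adjacent_suffixes_ordered ?T P"
    by (rule suffix_array_iff_adjacent_suffixes_ordered[OF distinct_P]) (simp add: set_P length_P)
  ultimately show ?thesis
    unfolding adjacent_suffixes_ordered_def admissible_split_def using length_P by simp
qed

lemma first_eq_1_if_n_follows_pred_last: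
  assumes y: "2 \<le> P ! (n - 1)" and n_follows: "rank P n = Suc (rank P (P ! (n - 1) - 1))"
  shows "P ! 0 = 1"
proof -
  define y where "y = P ! (n - 1)"
  define i0 where "i0 = rank P (y - 1)"
  have "y - 1 \<in> {1..n}" using y P_in[of "n - 1"] n_ge_3 unfolding y_def by auto
  then have i0: "i0 < n" "P ! i0 = y - 1" using rank_P unfolding i0_def by auto
  have "n \<in> {1..n}" using n_ge_3 by auto
  then have "P ! Suc i0 = n" "Suc i0 < n" using rank_P n_follows unfolding i0_def y_def by metis+
  then have "mod1 (y - 1 + k) n = n" using P_Suc i0 by simp
  moreover have "mod1 (n + 1) n = 1"
    using mod1_eq_iff_mod_eq[of "n + 1" n 1] mod1_id[of 1 n] n_ge_3 by (simp add: mod_Suc)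
  ultimately have "mod1 (y + k) n = 1"
    using mod1_add_left[of "y - 1 + k" n 1] y unfolding y_def by simp
  then show ?thesis using mod1_last_add unfolding y_def by simp
qed

lemma admissible_split_cases:
  assumes adm: "admissible_split s"
  shows "P ! 0 = n \<and> s = Suc (rank P (n - k - 1)) \<or>
    (P ! 0 = k + 1 \<or> P ! 0 = 1) \<and> s = rank P n"
proof -
  have split_at: "s = Suc i"
    if "Suc i < n" "P ! i \<noteq> n" "P ! i + 1 = P ! (n - 1) \<or> P ! Suc i = n" for i
    using adm that unfolding admissible_split_def by auto
  show ?thesis
  proof (cases "P ! 0 = n")
    case True
    have "n - k - 1 \<in> {1..n}" using k_le n_ge_3 by auto
    note i0 = rank_P[OF this]
    have last: "P ! (n - 1) = n - k" using P_last True k_le n_ge_3 by simp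
    then have "rank P (n - k - 1) \<noteq> n - 1" using i0 k_le n_ge_3 by auto
    then have "s = Suc (rank P (n - k - 1))"
      using i0 last k_less_n by (intro split_at) (auto simp: Suc_diff_Suc)
    then show ?thesis using True by simp
  next
    case False
    have "n \<in> {1..n}" using n_ge_3 by auto
    note r = rank_P[OF this]
    with False have r0: "rank P n \<noteq> 0" by metis
    have "rank P n - 1 < n" "rank P n - 1 \<noteq> rank P n" using r r0 by auto
    then have "P ! (rank P n - 1) \<noteq> P ! rank P n" using P_eq_iff r by blast
    then have s: "s = rank P n" using split_at[of "rank P n - 1"] r r0 by simp
    have "P ! 0 = k + 1 \<or> P ! 0 = 1"
    proof (rule ccontr)
      assume first: "\<not> (P ! 0 = k + 1 \<or> P ! 0 = 1)"
      define y where "y = P ! (n - 1)"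
      have y: "2 \<le> y" "y \<le> n"
        using P_last first P_in[of 0] P_in[of "n - 1"] k_le n_ge_3 unfolding y_def by auto
      then have "y - 1 \<in> {1..n}" by auto
      note i0 = rank_P[OF this]
      then have "rank P (y - 1) \<noteq> n - 1" using y unfolding y_def by auto
      then have "Suc (rank P (y - 1)) < n" using i0 by linarith
      then have "s = Suc (rank P (y - 1))" using i0 y unfolding y_def by (intro split_at) auto
      then show False
        using first_eq_1_if_n_follows_pred_last y s first unfolding y_def by simp
    qed
    then show ?thesis using s by simp
  qed
qed

lemma admissible_split_first_n:
  assumes "P ! 0 = n"
  shows "admissible_split (Suc (rank P (n - k - 1)))"
  unfolding admissible_split_def
proof (intro allI impI)
  fix i assume i: "Suc i < n"
  have last: "P ! (n - 1) = n - k" using P_last assms k_le n_ge_3 by simp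
  have "n - k - 1 \<in> {1..n}" using k_le n_ge_3 by auto
  note i0 = rank_P[OF this]
  have "P ! Suc i \<noteq> n" using P_eq_iff[of "Suc i" 0] assms i by auto
  moreover have "i = rank P (n - k - 1)" if "P ! i + 1 = n - k"
    using that P_eq_iff[of i "rank P (n - k - 1)"] i0 i by auto
  ultimately show "Suc i = Suc (rank P (n - k - 1)) \<or> P ! i = n \<or>
      P ! Suc i \<noteq> n \<and> P ! i + 1 \<noteq> P ! (n - 1)"
    using last by auto
qed

lemma admissible_split_rank_n:
  assumes "P ! 0 = k + 1 \<or> P ! 0 = 1"
  shows "admissible_split (rank P n)"
  unfolding admissible_split_def
proof (intro allI impI)
  fix i assume i: "Suc i < n"
  have "P ! i + 1 \<noteq> P ! (n - 1) \<or> P ! Suc i = n"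
  proof (cases "P ! 0 = k + 1")
    case True
    then have "P ! (n - 1) = 1" using P_last by simp
    then show ?thesis using P_in[of i] i by auto
  next
    case False
    then have "P ! (n - 1) = n + 1 - k" using assms P_last k_ge_1 by simp
    then have "P ! i = n - k" if "P ! i + 1 = P ! (n - 1)" using that k_less_n by simp
    moreover have "mod1 (n - k + k) n = n" using k_less_n n_ge_3 by (simp add: mod1_id)
    ultimately show ?thesis using P_Suc[OF i] by auto
  qed
  moreover have "rank P n = Suc i" if "P ! Suc i = n" using that rank_P_nth[OF i] by simp
  ultimately show "Suc i = rank P n \<or> P ! i = n \<or> P ! Suc i \<noteq> n \<and> P ! i + 1 \<noteq> P ! (n - 1)"
    by auto
qed

lemma admissible_split_iff:
  "admissible_split s \<longleftrightarrow>
    P ! 0 = n \<and> s = Suc (rank P (n - k - 1)) \<or> (P ! 0 = k + 1 \<or> P ! 0 = 1) \<and> s = rank P n"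
  using admissible_split_cases admissible_split_first_n admissible_split_rank_n by auto

lemma suffix_arrays_eq_block_strings:
  "{T :: bool list. length T = n \<and> is_suffix_array T P} = block_string P ` {s. admissible_split s}"
proof (intro equalityI subsetI)
  fix T :: "bool list" assume "T \<in> {T. length T = n \<and> is_suffix_array T P}"
  then have sa: "is_suffix_array T P" by simp
  then obtain s where "T = block_string P s" by (rule suffix_array_block_string)
  then show "T \<in> block_string P ` {s. admissible_split s}"
    using sa suffix_array_block_string_iff by auto
qed (use suffix_array_block_string_iff length_P in auto)

lemma suffix_array_first:
  fixes T :: "bool list"
  assumes "length T = n" "is_suffix_array T P"
  shows "P ! 0 = n \<or> P ! 0 = k + 1 \<or> P ! 0 = 1"
  using assms suffix_arrays_eq_block_strings admissible_split_cases by blast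

lemma block_string_at_rank: "x \<in> {1..n} \<Longrightarrow> block_string P s ! (x - 1) = (s \<le> rank P x)"
  using block_string_at[OF distinct_P, of "rank P x" s] rank_P set_P length_P by simp

(* Position i + (n - k) is directly followed in P by position i, so both carry the same letter
   unless i = P!0 or the boundary s lies between them, i.e. P!s = i; both need i \<le> k. *)
lemma block_string_period:
  assumes "s < n" "k < P ! 0" "k < P ! s"
  shows "has_period (block_string P s) (n - k)"
  unfolding has_period_def length_block_string length_P
proof (intro conjI ballI)
  show "1 \<le> n - k" "n - k \<le> n - 1" using k_le k_ge_1 n_ge_3 by auto
  fix i assume "i \<in> {1..n - (n - k)}"
  then have i: "1 \<le> i" "i \<le> k" using k_le by auto
  define x where "x = i + (n - k)"
  have x: "x \<in> {1..n}" using i k_le unfolding x_def by auto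
  have "mod1 (x + k) n = i"
    using mod1_add_small[OF x k_ge_1 k_less_n] i k_le unfolding x_def by auto
  then have rank_i: "rank P i = (if rank P x = n - 1 then 0 else Suc (rank P x))"
    using rank_mod1_add[OF x] by simp
  have "i \<in> {1..n}" using i k_le by auto
  note i_rank = rank_P[OF this]
  have "rank P i \<noteq> 0" using i_rank i assms(2) by (metis leD)
  then have "rank P i = Suc (rank P x)" using rank_i by presburger
  moreover have "s \<noteq> rank P i" using i_rank i assms(3) by (metis leD)
  ultimately show "block_string P s ! (i - 1) = block_string P s ! (i + (n - k) - 1)"
    using block_string_at_rank[OF x] block_string_at_rank[OF \<open>i \<in> {1..n}\<close>]
    unfolding x_def by auto
qed

lemma suffix_arrays_first_n:
  assumes first: "P ! 0 = n"
  obtains T where "{T. length T = n \<and> is_suffix_array T P} = {T}"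
    "sa_form n T n (n - k - 1)" "has_period T (n - k)" "T ! (n - 1) = letter_a"
proof
  define s where "s = Suc (rank P (n - k - 1))"
  have "n - k - 1 \<in> {1..n}" using k_le n_ge_3 by auto
  note i0 = rank_P[OF this]
  have "P ! (n - 1) = n - k" using P_last first k_le n_ge_3 by simp
  then have "rank P (n - k - 1) \<noteq> n - 1" using i0 k_le n_ge_3 by auto
  then have s: "s < n" "P ! (s - 1) = n - k - 1" using i0 unfolding s_def by auto
  then have "P ! s = mod1 (n - k - 1 + k) n" using P_Suc[of "s - 1"] unfolding s_def by simp
  also have "\<dots> = n - 1" using k_le n_ge_3 by (simp add: mod1_id)
  finally have "P ! s = n - 1" .
  have "{s. admissible_split s} = {s}" using admissible_split_iff first k_le n_ge_3 s_def by auto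
  then show "{T. length T = n \<and> is_suffix_array T P} = {block_string P s}"
    using suffix_arrays_eq_block_strings by simp
  then have "is_suffix_array (block_string P s) P" by auto
  then show "sa_form n (block_string P s) n (n - k - 1)"
    using sa_form_block_string[of P s] s first length_P unfolding s_def by simp
  show "has_period (block_string P s) (n - k)"
    using block_string_period \<open>P ! s = n - 1\<close> s first k_le n_ge_3 by simp
  show "block_string P s ! (n - 1) = letter_a"
    using block_string_at[OF distinct_P, of 0 s] set_P length_P first n_ge_3 unfolding s_def by simp
qed

lemma rank_n_pred:
  assumes "P ! 0 \<noteq> n"
  shows "0 < rank P n" "rank P n < n" "P ! (rank P n - 1) = n - k"
proof -
  have "n \<in> {1..n}" using n_ge_3 by auto
  note r = rank_P[OF this]
  show "0 < rank P n" using r assms by (metis neq0_conv)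
  define x where "x = P ! (rank P n - 1)"
  have x: "x \<in> {1..n}" using P_in[of "rank P n - 1"] r unfolding x_def by linarith
  have "mod1 (x + k) n = n" using P_Suc[of "rank P n - 1"] r \<open>0 < rank P n\<close> unfolding x_def by simp
  then have "(if x + k \<le> n then x + k else x + k - n) = n"
    using mod1_add_small[OF x k_ge_1 k_less_n] by simp
  then show "P ! (rank P n - 1) = n - k"
    using x k_less_n unfolding x_def[symmetric] by (cases "x + k \<le> n") auto
  show "rank P n < n" using r by simp
qed

lemma suffix_arrays_split_before_n:
  assumes first: "P ! 0 = k + 1 \<or> P ! 0 = 1"
  shows "{T. length T = n \<and> is_suffix_array T P} = {block_string P (rank P n)}"
    "sa_form n (block_string P (rank P n)) (P ! 0) (n - k)"
    "block_string P (rank P n) ! (n - 1) = letter_b"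
proof -
  have "P ! 0 \<noteq> n" using first k_le n_ge_3 by auto
  note r = rank_n_pred[OF this]
  have "{s. admissible_split s} = {rank P n}" using admissible_split_iff first k_le n_ge_3 by auto
  then show sa: "{T. length T = n \<and> is_suffix_array T P} = {block_string P (rank P n)}"
    using suffix_arrays_eq_block_strings by simp
  then show "sa_form n (block_string P (rank P n)) (P ! 0) (n - k)"
    using sa_form_block_string[of P "rank P n"] r length_P by auto
  show "block_string P (rank P n) ! (n - 1) = letter_b"
    using block_string_at_rank[of n] n_ge_3 by simp
qed

lemma suffix_arrays_first_k_Suc:
  assumes first: "P ! 0 = k + 1"
  obtains T where "{T. length T = n \<and> is_suffix_array T P} = {T}"
    "sa_form n T (k + 1) (n - k)" "has_period T (n - k)" "T ! 0 = letter_b" "T ! (n - 1) = letter_b"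
proof
  let ?T = "block_string P (rank P n)"
  show "{T. length T = n \<and> is_suffix_array T P} = {?T}" "sa_form n ?T (k + 1) (n - k)"
    "?T ! (n - 1) = letter_b"
    using suffix_arrays_split_before_n[OF disjI1[OF first]] first by simp_all
  have "P ! 0 \<noteq> n" using first k_le n_ge_3 by auto
  note r = rank_n_pred[OF this]
  have "P ! rank P n = n" using rank_P n_ge_3 by simp
  then show "has_period ?T (n - k)" using block_string_period r first k_less_n by simp
  have "P ! (n - 1) = 1" using P_last first by simp
  then show "?T ! 0 = letter_b"
    using block_string_at[OF distinct_P, of "n - 1" "rank P n"] set_P length_P r n_ge_3 by simp
qed

lemma suffix_arrays_first_1:
  assumes first: "P ! 0 = 1"
  obtains T where "{T. length T = n \<and> is_suffix_array T P} = {T}"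
    "sa_form n T 1 (n - k)" "lyndon T" "T ! 0 = letter_a" "T ! (n - 1) = letter_b"
proof
  let ?T = "block_string P (rank P n)"
  show "{T. length T = n \<and> is_suffix_array T P} = {?T}" and "sa_form n ?T 1 (n - k)"
    "?T ! (n - 1) = letter_b"
    using suffix_arrays_split_before_n[OF disjI2[OF first]] first by simp_all
  then have "is_suffix_array ?T P" by blast
  moreover have "?T \<noteq> []" using length_P n_ge_3 by (auto simp flip: length_greater_0_conv)
  ultimately show "lyndon ?T" using suffix_array_starting_at_1_lyndon first by blast
  have "P ! 0 \<noteq> n" using first n_ge_3 by auto
  then show "?T ! 0 = letter_a"
    using block_string_at[OF distinct_P, of 0 "rank P n"] set_P length_P rank_n_pred first n_ge_3
    by simp
qed

end

lemma arith_prog_suffix_arrays_eq_Union: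
  assumes "3 \<le> n" "1 \<le> k" "k \<le> n - 2" "coprime k n"
  shows "{T :: bool list. length T = n \<and> (\<exists>P. is_suffix_array T P \<and> arith_prog_perm n k P)}
    = (\<Union>p\<in>{n, k + 1, 1}. {T. length T = n \<and> is_suffix_array T (ap_perm n k p)})"
proof (intro equalityI subsetI)
  fix T :: "bool list"
  assume "T \<in> {T. length T = n \<and> (\<exists>P. is_suffix_array T P \<and> arith_prog_perm n k P)}"
  then obtain P where T: "length T = n" "is_suffix_array T P" "arith_prog_perm n k P" by auto
  interpret ap_suffix_array n k P using T assms by unfold_locales
  show "T \<in> (\<Union>p\<in>{n, k + 1, 1}. {T. length T = n \<and> is_suffix_array T (ap_perm n k p)})"
    using suffix_array_first[OF T(1,2)] arith_prog_perm_eq_ap_perm[OF T(3)] T by auto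
next
  fix T assume "T \<in> (\<Union>p\<in>{n, k + 1, 1}. {T. length T = n \<and> is_suffix_array T (ap_perm n k p)})"
  then show "T \<in> {T. length T = n \<and> (\<exists>P. is_suffix_array T P \<and> arith_prog_perm n k P)}"
    using arith_prog_perm_ap_perm[OF assms(4,2)] assms by auto
qed

theorem theorem10:
  fixes n k :: nat
  assumes "n \<ge> 3" and "1 \<le> k" and "k \<le> n - 2" and "coprime k n"
  shows "\<exists>T1 T2 T3 :: ab_string.
    distinct [T1, T2, T3] \<and>
    {T :: ab_string. length T = n \<and> (\<exists>P. is_suffix_array T P \<and> arith_prog_perm n k P)}
      = {T1, T2, T3} \<and>
    sa_form n T1 n (n - k - 1) \<and>
    sa_form n T2 (k + 1) (n - k) \<and>
    sa_form n T3 1 (n - k) \<and>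
    has_period T1 (n - k) \<and> has_period T2 (n - k) \<and> lyndon T3"
proof -
  have ap: "ap_suffix_array n k (ap_perm n k p)" and first: "ap_perm n k p ! 0 = p"
    if "p \<in> {1..n}" for p
    using arith_prog_perm_ap_perm[OF assms(4,2)] ap_perm_nth_0 that assms
    by (auto intro: ap_suffix_array.intro)
  have p: "n \<in> {1..n}" "k + 1 \<in> {1..n}" "1 \<in> {1..n}" using assms by auto
  obtain T1 where T1: "{T. length T = n \<and> is_suffix_array T (ap_perm n k n)} = {T1}"
    "sa_form n T1 n (n - k - 1)" "has_period T1 (n - k)" "T1 ! (n - 1) = letter_a"
    using ap_suffix_array.suffix_arrays_first_n[OF ap[OF p(1)] first[OF p(1)]] by blast
  obtain T2 where T2: "{T. length T = n \<and> is_suffix_array T (ap_perm n k (k + 1))} = {T2}"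
    "sa_form n T2 (k + 1) (n - k)" "has_period T2 (n - k)" "T2 ! 0 = letter_b" "T2 ! (n - 1) = letter_b"
    using ap_suffix_array.suffix_arrays_first_k_Suc[OF ap[OF p(2)] first[OF p(2)]] by blast
  obtain T3 where T3: "{T. length T = n \<and> is_suffix_array T (ap_perm n k 1)} = {T3}"
    "sa_form n T3 1 (n - k)" "lyndon T3" "T3 ! 0 = letter_a" "T3 ! (n - 1) = letter_b"
    using ap_suffix_array.suffix_arrays_first_1[OF ap[OF p(3)] first[OF p(3)]] by blast
  have "distinct [T1, T2, T3]" using T1(4) T2(4,5) T3(4,5) by auto
  moreover have
    "{T. length T = n \<and> (\<exists>P. is_suffix_array T P \<and> arith_prog_perm n k P)} = {T1, T2, T3}"
    unfolding arith_prog_suffix_arrays_eq_Union[OF assms] using T1(1) T2(1) T3(1) by auto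
  ultimately show ?thesis using T1 T2 T3 by blast
qed

end
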